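(* Let $N\ge 2$ and let $A_1,\dots,A_N$ be distinct Boolean variables. Then $$A_1\vee A_2\vee\dots\vee A_N=(A_1<(A_2<\cdots(A_N<1)\cdots))<1$$ as Boolean functions, and this right-hand side, which contains exactly two occurrences of the constant $1$ and exactly one occurrence of each variable $A_i$, is a minimal $(<,1)$-representation of $A_1\vee\dots\vee A_N$, i.e. no $(<,1)$-expression representing $A_1\vee\dots\vee A_N$ uses fewer occurrences of the operation $<$.
   Context: The binary Boolean operation $<$ (Strict Boolean Inequality) is defined by $A<B=(\neg A)\wedge B$, i.e. $A<B=1$ iff $A=0$ and $B=1$. A $(<,1)$-representation (or $(<,1)$-expression) of a Boolean function of variables $A_1,\dots,A_N$ is a formula built from the variables $A_1,\dots,A_N$ and the constant $1$ using only the binary operation $<$, which computes that function; its cost is the number of occurrences of $<$ (number of gates), and a representation is minimal if no representation of the same function has smaller cost. *)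

theory Defs
  imports Main
begin

definition slt :: "bool \<Rightarrow> bool \<Rightarrow> bool" where
  "slt a b \<longleftrightarrow> \<not> a \<and> b"

datatype expr = One | Var nat | Lt expr expr

primrec eval :: "(nat \<Rightarrow> bool) \<Rightarrow> expr \<Rightarrow> bool" where
  "eval v One = True"
| "eval v (Var i) = v i"
| "eval v (Lt e1 e2) = slt (eval v e1) (eval v e2)"

primrec cost :: "expr \<Rightarrow> nat" where
  "cost One = 0"
| "cost (Var i) = 0"
| "cost (Lt e1 e2) = Suc (cost e1 + cost e2)"

primrec vars :: "expr \<Rightarrow> nat set" where
  "vars One = {}"
| "vars (Var i) = {i}"
| "vars (Lt e1 e2) = vars e1 \<union> vars e2"

primrec ones :: "expr \<Rightarrow> nat" where
  "ones One = 1"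
| "ones (Var i) = 0"
| "ones (Lt e1 e2) = ones e1 + ones e2"

primrec var_count :: "nat \<Rightarrow> expr \<Rightarrow> nat" where
  "var_count j One = 0"
| "var_count j (Var i) = (if i = j then 1 else 0)"
| "var_count j (Lt e1 e2) = var_count j e1 + var_count j e2"

definition is_expr_over :: "nat \<Rightarrow> expr \<Rightarrow> bool" where
  "is_expr_over N e \<longleftrightarrow> vars e \<subseteq> {1..N}"

primrec chain :: "nat \<Rightarrow> nat \<Rightarrow> expr" where
  "chain i 0 = One"
| "chain i (Suc k) = Lt (Var i) (chain (Suc i) k)"

definition or_rep :: "nat \<Rightarrow> expr" where
  "or_rep N = Lt (chain 1 N) One"

end

(*
  Upper bound: chain 1 N is true exactly when all of A_1..A_N are false, so
  chain 1 N < 1 is their disjunction, at cost N + 1.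

  Lower bound, by induction on a representation e of the disjunction of the
  variables in S (|S| \<ge> 2).  For
  e = a < b: if a is never true then e behaves like b.  Otherwise a is true at
  some v, which makes e false, so v vanishes on S and a is true at the all-false
  assignment.  Switching on any single i \<in> S makes e, hence not a, true, so a
  depends on every variable of S.  A formula of cost c has c + 1 leaves, and one
  true at the all-false assignment needs a leaf 1, so cost a \<ge> |S| and
  cost e \<ge> |S| + 1.
*)
theory Submission
  imports Defs
begin

lemma eval_chain: "eval v (chain i k) \<longleftrightarrow> (\<forall>j\<in>{i..<i+k}. \<not> v j)"
proof (induction k arbitrary: i)
  case (Suc k)
  have "{i..<i + Suc k} = insert i {Suc i..<Suc i + k}" by auto
  then show ?case using Suc by (simp add: slt_def)
qed simp

lemma vars_chain: "vars (chain i k) = {i..<i+k}"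
  by (induction k arbitrary: i) auto

lemma ones_chain: "ones (chain i k) = 1"
  by (induction k arbitrary: i) auto

lemma cost_chain: "cost (chain i k) = k"
  by (induction k arbitrary: i) auto

lemma var_count_chain: "var_count j (chain i k) = (if j \<in> {i..<i+k} then 1 else 0)"
  by (induction k arbitrary: i) auto

lemma eval_cong: "(\<And>j. j \<in> vars e \<Longrightarrow> v j = w j) \<Longrightarrow> eval v e = eval w e"
  by (induction e) auto

lemma finite_vars: "finite (vars e)"
  by (induction e) auto

lemma ones_pos_if_eval_all_False: "eval (\<lambda>_. False) e \<Longrightarrow> 0 < ones e"
  by (induction e) (auto simp: slt_def)

lemma card_vars_plus_ones_le_cost: "card (vars e) + ones e \<le> cost e + 1"
proof (induction e)
  case (Lt e1 e2)
  then show ?case using card_Un_le[of "vars e1" "vars e2"] by simp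
qed auto

lemma card_vars_le_cost_if_eval_all_False:
  "eval (\<lambda>_. False) e \<Longrightarrow> card (vars e) \<le> cost e"
  using card_vars_plus_ones_le_cost[of e] ones_pos_if_eval_all_False[of e] by simp

lemma mem_vars_if_eval_point_differs:
  assumes "eval (\<lambda>j. j = i) e \<noteq> eval (\<lambda>_. False) e"
  shows "i \<in> vars e"
  using assms eval_cong[of e "\<lambda>j. j = i" "\<lambda>_. False"] by auto

lemma cost_ge_if_represents_disjunction:
  assumes "2 \<le> card S"
  shows "vars e \<subseteq> S \<Longrightarrow> \<forall>v. eval v e = (\<exists>i\<in>S. v i) \<Longrightarrow> card S + 1 \<le> cost e"
proof (induction e)
  case One
  have "S \<noteq> {}" using assms by auto
  then show ?case using One.prems(2)[rule_format, of "\<lambda>_. False"] by simp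
next
  case (Var i)
  have "card (S - {i}) \<noteq> 0" using assms diff_card_le_card_Diff[of "{i}" S] by simp
  then obtain k where "k \<in> S - {i}" by (metis card.empty ex_in_conv)
  then show ?case using Var.prems(2)[rule_format, of "\<lambda>j. j = k"] by auto
next
  case (Lt a b)
  show ?case
  proof (cases "\<exists>v. eval v a")
    case False
    then have "\<forall>v. eval v b = (\<exists>i\<in>S. v i)" using Lt.prems(2) by (simp add: slt_def)
    then show ?thesis using Lt by simp
  next
    case True
    then obtain v where "eval v a" by blast
    then have "\<forall>i\<in>S. \<not> v i" using Lt.prems(2)[rule_format, of v] by (auto simp: slt_def)
    moreover have "vars a \<subseteq> S" using Lt.prems(1) by simp
    ultimately have a_all_False: "eval (\<lambda>_. False) a"
      using \<open>eval v a\<close> eval_cong[of a v "\<lambda>_. False"] by auto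
    have "S \<subseteq> vars a"
    proof
      fix i assume "i \<in> S"
      then have "\<not> eval (\<lambda>j. j = i) a" using Lt.prems(2)[rule_format, of "\<lambda>j. j = i"]
        by (auto simp: slt_def)
      with a_all_False show "i \<in> vars a" using mem_vars_if_eval_point_differs by blast
    qed
    then have "card S \<le> card (vars a)" using card_mono[OF finite_vars] by blast
    also have "\<dots> \<le> cost a" using card_vars_le_cost_if_eval_all_False[OF a_all_False] .
    finally show ?thesis by simp
  qed
qed

theorem mainTheorem3:
  fixes N :: nat
  assumes "N \<ge> 2"
  shows "(\<forall>v. eval v (or_rep N) = (\<exists>i\<in>{1..N}. v i))
       \<and> is_expr_over N (or_rep N)
       \<and> ones (or_rep N) = 2
       \<and> (\<forall>i\<in>{1..N}. var_count i (or_rep N) = 1)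
       \<and> (\<forall>e. is_expr_over N e \<and> (\<forall>v. eval v e = (\<exists>i\<in>{1..N}. v i))
              \<longrightarrow> cost (or_rep N) \<le> cost e)"
proof (intro conjI allI impI)
  fix v show "eval v (or_rep N) = (\<exists>i\<in>{1..N}. v i)"
    by (auto simp: or_rep_def slt_def eval_chain)
next
  show "is_expr_over N (or_rep N)" by (auto simp: is_expr_over_def or_rep_def vars_chain)
next
  show "ones (or_rep N) = 2" by (simp add: or_rep_def ones_chain)
next
  show "\<forall>i\<in>{1..N}. var_count i (or_rep N) = 1" by (auto simp: or_rep_def var_count_chain)
next
  fix e assume "is_expr_over N e \<and> (\<forall>v. eval v e = (\<exists>i\<in>{1..N}. v i))"
  moreover have "2 \<le> card {1..N}" using assms by simp
  ultimately have "N + 1 \<le> cost e"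
    using cost_ge_if_represents_disjunction[of "{1..N}" e] by (auto simp: is_expr_over_def)
  then show "cost (or_rep N) \<le> cost e" by (simp add: or_rep_def cost_chain)
qed

end
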